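(* Let $A\in\mathcal{C}_n$ and let $w\in\mathbb{R}^n$ be nonzero. Then $A$ is irreducible with respect to $ww^T$ if and only if there exists a minimal zero $u$ of $A$ with $w^Tu\ne0$.
   Context: $\mathcal{C}_n$ denotes the cone of copositive matrices: real symmetric $n\times n$ matrices $A$ with $x^TAx\ge 0$ for all $x\in\mathbb{R}^n_+$. For a nonzero matrix $M$, $A$ is irreducible with respect to $M$ if there does not exist $\gamma>0$ with $A-\gamma M\in\mathcal{C}_n$. A zero of $A$ is a nonzero $u\in\mathbb{R}^n_+$ with $u^TAu=0$; $\operatorname{Supp}(u)=\{i:u_i\ne0\}$; a zero $u$ is minimal if there is no zero $v$ with $\operatorname{Supp}(v)\subsetneq\operatorname{Supp}(u)$. *)

theory Defs
  imports "HOL-Analysis.Analysis"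
begin

definition nonneg_vec :: "real ^ 'n \<Rightarrow> bool" where
  "nonneg_vec x \<longleftrightarrow> (\<forall>i. 0 \<le> x $ i)"

definition copositive :: "real ^ 'n ^ 'n \<Rightarrow> bool" where
  "copositive A \<longleftrightarrow> transpose A = A \<and> (\<forall>x. nonneg_vec x \<longrightarrow> 0 \<le> x \<bullet> (A *v x))"

definition irreducible_wrt :: "real ^ 'n ^ 'n \<Rightarrow> real ^ 'n ^ 'n \<Rightarrow> bool" where
  "irreducible_wrt A M \<longleftrightarrow> \<not> (\<exists>\<gamma>>0. copositive (A - \<gamma> *\<^sub>R M))"

definition is_zero :: "real ^ 'n ^ 'n \<Rightarrow> real ^ 'n \<Rightarrow> bool" where
  "is_zero A u \<longleftrightarrow> u \<noteq> 0 \<and> nonneg_vec u \<and> u \<bullet> (A *v u) = 0"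

definition supp :: "real ^ 'n \<Rightarrow> 'n set" where
  "supp u = {i. u $ i \<noteq> 0}"

definition minimal_zero :: "real ^ 'n ^ 'n \<Rightarrow> real ^ 'n \<Rightarrow> bool" where
  "minimal_zero A u \<longleftrightarrow> is_zero A u \<and> \<not> (\<exists>v. is_zero A v \<and> supp v \<subset> supp u)"

definition outer :: "real ^ 'n \<Rightarrow> real ^ 'n \<Rightarrow> real ^ 'n ^ 'n" where
  "outer w v = (\<chi> i j. w $ i * v $ j)"

end

theory Submission
  imports Defs
begin

(* If u is a minimal zero with w \<bullet> u \<noteq> 0, then u^T (A - \<gamma> w w^T) u = - \<gamma> (w \<bullet> u)^2 < 0 for
   every \<gamma> > 0. Conversely, if every minimal zero is orthogonal to w, one finds \<gamma> > 0 with
   \<gamma> (w \<bullet> x)^2 \<le> x^T A x on every face {x \<ge> 0. supp x \<subseteq> S}, by induction on S. If A has no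
   zero on the face, compactness of its unit sphere gives x^T A x \<ge> c |x|^2 there. Otherwise the
   face contains a minimal zero y; subtracting from x the largest multiple of y that keeps it
   nonnegative moves x to a smaller face, leaves w \<bullet> x unchanged and does not increase x^T A x,
   because z^T A y \<ge> 0 for all z \<ge> 0 when y is a zero of the copositive matrix A. *)

lemma inner_matrix_symmetric:
  fixes A :: "real ^ 'n ^ 'n"
  assumes "transpose A = A"
  shows "x \<bullet> (A *v y) = y \<bullet> (A *v x)"
  by (metis assms dot_lmul_matrix inner_commute vector_transpose_matrix)

lemma quadratic_form_add_scaleR:
  fixes A :: "real ^ 'n ^ 'n"
  assumes "transpose A = A"
  shows "(x + t *\<^sub>R z) \<bullet> (A *v (x + t *\<^sub>R z)) =
    x \<bullet> (A *v x) + 2 * t * (z \<bullet> (A *v x)) + t\<^sup>2 * (z \<bullet> (A *v z))"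
  using inner_matrix_symmetric[OF assms, of x z]
  by (simp add: matrix_vector_right_distrib matrix_vector_mult_scaleR inner_add_left
      inner_add_right power2_eq_square algebra_simps)

lemma quadratic_form_scaleR:
  fixes A :: "real ^ 'n ^ 'n"
  shows "(c *\<^sub>R x) \<bullet> (A *v (c *\<^sub>R x)) = c\<^sup>2 * (x \<bullet> (A *v x))"
  by (simp add: matrix_vector_mult_scaleR power2_eq_square)

lemma copositive_zero_inner_nonneg:
  fixes A :: "real ^ 'n ^ 'n"
  assumes cop: "copositive A" and y: "is_zero A y" and z: "nonneg_vec z"
  shows "0 \<le> z \<bullet> (A *v y)"
proof -
  have sym: "transpose A = A"
    using cop by (simp add: copositive_def)
  have "0 \<le> 2 * (z \<bullet> (A *v y)) + t * (z \<bullet> (A *v z))" if "t > 0" for t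
  proof -
    have "nonneg_vec (y + t *\<^sub>R z)"
      using y z \<open>t > 0\<close> by (simp add: nonneg_vec_def is_zero_def)
    then have "0 \<le> (y + t *\<^sub>R z) \<bullet> (A *v (y + t *\<^sub>R z))"
      using cop by (simp add: copositive_def)
    also have "\<dots> = t * (2 * (z \<bullet> (A *v y)) + t * (z \<bullet> (A *v z)))"
      using quadratic_form_add_scaleR[OF sym, of y t z] y
      by (simp add: is_zero_def power2_eq_square algebra_simps)
    finally show ?thesis
      using \<open>t > 0\<close> by (simp add: zero_le_mult_iff)
  qed
  then have "\<forall>\<^sub>F t in at_right 0. 0 \<le> 2 * (z \<bullet> (A *v y)) + t * (z \<bullet> (A *v z))"
    by (auto simp: eventually_at_right_field intro: exI[of _ 1])
  moreover have "((\<lambda>t. 2 * (z \<bullet> (A *v y)) + t * (z \<bullet> (A *v z))) \<longlongrightarrow> 2 * (z \<bullet> (A *v y)))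
      (at_right 0)"
    by (intro tendsto_eq_intros) auto
  ultimately have "0 \<le> 2 * (z \<bullet> (A *v y))"
    by (intro tendsto_lowerbound) auto
  then show ?thesis
    by simp
qed

lemma quadratic_form_sub_zero_le:
  fixes A :: "real ^ 'n ^ 'n"
  assumes cop: "copositive A" and y: "is_zero A y"
    and "0 \<le> s" and nonneg: "nonneg_vec (x - s *\<^sub>R y)"
  shows "(x - s *\<^sub>R y) \<bullet> (A *v (x - s *\<^sub>R y)) \<le> x \<bullet> (A *v x)"
proof -
  define z where "z = x - s *\<^sub>R y"
  have sym: "transpose A = A"
    using cop by (simp add: copositive_def)
  have "x \<bullet> (A *v x) = z \<bullet> (A *v z) + 2 * s * (z \<bullet> (A *v y))"
    using quadratic_form_add_scaleR[OF sym, of z s y] inner_matrix_symmetric[OF sym, of y z] y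
    by (simp add: z_def is_zero_def)
  moreover have "0 \<le> z \<bullet> (A *v y)"
    using copositive_zero_inner_nonneg[OF cop y] nonneg by (simp add: z_def)
  ultimately show ?thesis
    using \<open>0 \<le> s\<close> by (simp add: z_def)
qed

lemma nonneg_vec_sub_scaleR_vanishing:
  assumes x: "nonneg_vec x" and y: "nonneg_vec y" "y \<noteq> 0"
  obtains s i where "0 \<le> s" "i \<in> supp y" "nonneg_vec (x - s *\<^sub>R y)" "(x - s *\<^sub>R y) $ i = 0"
proof -
  define r where "r i = x $ i / y $ i" for i
  have "supp y \<noteq> {}"
    using y(2) by (auto simp: supp_def vec_eq_iff)
  then have "Min (r ` supp y) \<in> r ` supp y"
    by (intro Min_in) auto
  then obtain i where i: "i \<in> supp y" "r i = Min (r ` supp y)"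
    by auto
  have y_pos: "0 < y $ j" if "j \<in> supp y" for j
    using that y(1) by (auto simp: supp_def nonneg_vec_def less_le)
  have "nonneg_vec (x - r i *\<^sub>R y)"
    unfolding nonneg_vec_def
  proof
    fix j
    show "0 \<le> (x - r i *\<^sub>R y) $ j"
    proof (cases "j \<in> supp y")
      case True
      then have "r i \<le> x $ j / y $ j"
        using i(2) by (simp add: r_def)
      then show ?thesis
        using y_pos[OF True] by (simp add: pos_le_divide_eq)
    next
      case False
      then show ?thesis
        using x by (simp add: supp_def nonneg_vec_def)
    qed
  qed
  moreover have "0 \<le> r i"
    using x y_pos[OF i(1)] by (simp add: r_def nonneg_vec_def)
  moreover have "(x - r i *\<^sub>R y) $ i = 0"
    using y_pos[OF i(1)] by (simp add: r_def)
  ultimately show ?thesis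
    using that i(1) by blast
qed

lemma minimal_zero_below:
  fixes A :: "real ^ 'n ^ 'n"
  shows "is_zero A x \<Longrightarrow> \<exists>y. minimal_zero A y \<and> supp y \<subseteq> supp x"
proof (induction "card (supp x)" arbitrary: x rule: less_induct)
  case less
  show ?case
  proof (cases "minimal_zero A x")
    case False
    then obtain v where v: "is_zero A v" "supp v \<subset> supp x"
      using less.prems by (auto simp: minimal_zero_def)
    then have "card (supp v) < card (supp x)"
      by (simp add: psubset_card_mono)
    then obtain y where "minimal_zero A y" "supp y \<subseteq> supp v"
      using less.hyps v(1) by blast
    then show ?thesis
      using v(2) by blast
  qed auto
qed

lemma closed_nonneg_face: "closed {x :: real ^ 'n. nonneg_vec x \<and> supp x \<subseteq> S}"
proof -
  have "{x :: real ^ 'n. nonneg_vec x \<and> supp x \<subseteq> S} =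
      {x. \<forall>i. 0 \<le> x $ i} \<inter> {x. \<forall>i. i \<in> S \<or> x $ i = 0}"
    by (auto simp: nonneg_vec_def supp_def)
  moreover have "closed {x :: real ^ 'n. \<forall>i. i \<in> S \<or> x $ i = 0}"
    by (intro closed_Collect_all closed_Collect_disj closed_Collect_eq continuous_intros) auto
  ultimately show ?thesis
    by (auto intro!: closed_Int closed_Collect_all closed_Collect_le continuous_intros)
qed

lemma copositive_coercive_on_face:
  fixes A :: "real ^ 'n ^ 'n"
  assumes cop: "copositive A" and no_zero: "\<not> (\<exists>y. is_zero A y \<and> supp y \<subseteq> S)"
  shows "\<exists>c>0. \<forall>x. nonneg_vec x \<and> supp x \<subseteq> S \<longrightarrow> c * (norm x)\<^sup>2 \<le> x \<bullet> (A *v x)"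
proof (cases "\<exists>x. nonneg_vec x \<and> supp x \<subseteq> S \<and> x \<noteq> 0")
  case False
  then show ?thesis
    by (intro exI[of _ 1]) auto
next
  case True
  define K where "K = {x. nonneg_vec x \<and> supp x \<subseteq> S} \<inter> sphere 0 1"
  have normalize_in_K: "(1 / norm x) *\<^sub>R x \<in> K" if "nonneg_vec x" "supp x \<subseteq> S" "x \<noteq> 0" for x
    using that by (auto simp: K_def nonneg_vec_def supp_def)
  then have "K \<noteq> {}"
    using True by blast
  moreover have "compact K"
    unfolding K_def by (intro closed_Int_compact compact_sphere closed_nonneg_face)
  moreover have "continuous_on K (\<lambda>x. x \<bullet> (A *v x))"
    by (intro continuous_intros)
  ultimately obtain x0 where x0: "x0 \<in> K" "\<And>x. x \<in> K \<Longrightarrow> x0 \<bullet> (A *v x0) \<le> x \<bullet> (A *v x)"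
    by (metis continuous_attains_inf)
  have "x0 \<bullet> (A *v x0) \<noteq> 0"
    using no_zero x0(1) by (auto simp: K_def is_zero_def)
  moreover have "0 \<le> x0 \<bullet> (A *v x0)"
    using cop x0(1) by (simp add: K_def copositive_def)
  ultimately have pos: "0 < x0 \<bullet> (A *v x0)"
    by linarith
  have "x0 \<bullet> (A *v x0) * (norm x)\<^sup>2 \<le> x \<bullet> (A *v x)" if "nonneg_vec x" "supp x \<subseteq> S" for x
  proof (cases "x = 0")
    case False
    have "x0 \<bullet> (A *v x0) \<le> ((1 / norm x) *\<^sub>R x) \<bullet> (A *v ((1 / norm x) *\<^sub>R x))"
      using x0(2) normalize_in_K[OF that False] .
    also have "\<dots> = x \<bullet> (A *v x) / (norm x)\<^sup>2"
      by (simp only: quadratic_form_scaleR) (simp add: power_divide)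
    finally show ?thesis
      using False by (simp add: pos_le_divide_eq)
  qed simp
  then show ?thesis
    using pos by blast
qed

lemma rank_one_bound_through_zero:
  fixes A :: "real ^ 'n ^ 'n" and w :: "real ^ 'n"
  assumes cop: "copositive A" and y: "is_zero A y" "w \<bullet> y = 0" "supp y \<subseteq> S"
    and smaller_faces: "\<And>i. i \<in> supp y \<Longrightarrow>
      \<exists>\<gamma>>0. \<forall>x. nonneg_vec x \<and> supp x \<subseteq> S - {i} \<longrightarrow> \<gamma> * (w \<bullet> x)\<^sup>2 \<le> x \<bullet> (A *v x)"
  shows "\<exists>\<gamma>>0. \<forall>x. nonneg_vec x \<and> supp x \<subseteq> S \<longrightarrow> \<gamma> * (w \<bullet> x)\<^sup>2 \<le> x \<bullet> (A *v x)"
proof -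
  obtain g where g_pos: "\<And>i. i \<in> supp y \<Longrightarrow> 0 < g i"
    and g_bound: "\<And>i x. i \<in> supp y \<Longrightarrow> nonneg_vec x \<Longrightarrow> supp x \<subseteq> S - {i} \<Longrightarrow>
      g i * (w \<bullet> x)\<^sup>2 \<le> x \<bullet> (A *v x)"
    using smaller_faces by metis
  have "supp y \<noteq> {}"
    using y(1) by (auto simp: is_zero_def supp_def vec_eq_iff)
  then have pos: "0 < Min (g ` supp y)"
    using g_pos by simp
  have "Min (g ` supp y) * (w \<bullet> x)\<^sup>2 \<le> x \<bullet> (A *v x)" if x: "nonneg_vec x" "supp x \<subseteq> S" for x
  proof -
    obtain s i where s: "0 \<le> s" "i \<in> supp y" "nonneg_vec (x - s *\<^sub>R y)" "(x - s *\<^sub>R y) $ i = 0"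
      using nonneg_vec_sub_scaleR_vanishing[OF x(1)] y(1) by (auto simp: is_zero_def)
    have "supp (x - s *\<^sub>R y) \<subseteq> S - {i}"
      using x(2) y(3) s(4) by (fastforce simp: supp_def)
    then have "g i * (w \<bullet> (x - s *\<^sub>R y))\<^sup>2 \<le> (x - s *\<^sub>R y) \<bullet> (A *v (x - s *\<^sub>R y))"
      using g_bound s(2,3) by blast
    also have "\<dots> \<le> x \<bullet> (A *v x)"
      using quadratic_form_sub_zero_le[OF cop y(1) s(1,3)] .
    finally have "g i * (w \<bullet> x)\<^sup>2 \<le> x \<bullet> (A *v x)"
      using y(2) by (simp add: inner_diff_right)
    moreover have "Min (g ` supp y) \<le> g i"
      using s(2) by simp
    ultimately show ?thesis
      by (meson mult_right_mono zero_le_power2 order_trans)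
  qed
  with pos show ?thesis
    by blast
qed

lemma rank_one_bound_on_face:
  fixes A :: "real ^ 'n ^ 'n" and w :: "real ^ 'n"
  assumes cop: "copositive A" and orth: "\<And>u. minimal_zero A u \<Longrightarrow> w \<bullet> u = 0"
  shows "\<exists>\<gamma>>0. \<forall>x. nonneg_vec x \<and> supp x \<subseteq> S \<longrightarrow> \<gamma> * (w \<bullet> x)\<^sup>2 \<le> x \<bullet> (A *v x)"
  using finite[of S]
proof (induction S rule: finite_psubset_induct)
  case (psubset S)
  show ?case
  proof (cases "\<exists>x. is_zero A x \<and> supp x \<subseteq> S")
    case True
    then obtain y where y: "minimal_zero A y" "supp y \<subseteq> S"
      using minimal_zero_below by (meson order_trans)
    show ?thesis
    proof (rule rank_one_bound_through_zero[OF cop _ orth[OF y(1)] y(2)])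
      show "is_zero A y"
        using y(1) by (simp add: minimal_zero_def)
    next
      fix i
      assume "i \<in> supp y"
      then show "\<exists>\<gamma>>0. \<forall>x. nonneg_vec x \<and> supp x \<subseteq> S - {i} \<longrightarrow> \<gamma> * (w \<bullet> x)\<^sup>2 \<le> x \<bullet> (A *v x)"
        using y(2) by (intro psubset.IH) auto
    qed
  next
    case False
    then obtain c where c: "0 < c" "\<And>x. nonneg_vec x \<Longrightarrow> supp x \<subseteq> S \<Longrightarrow> c * (norm x)\<^sup>2 \<le> x \<bullet> (A *v x)"
      using copositive_coercive_on_face[OF cop] by blast
    define \<gamma> where "\<gamma> = c / ((norm w)\<^sup>2 + 1)"
    have \<gamma>_pos: "0 < \<gamma>"
      using c(1) by (simp add: \<gamma>_def add_nonneg_pos)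
    have "\<gamma> * (w \<bullet> x)\<^sup>2 \<le> x \<bullet> (A *v x)" if "nonneg_vec x" "supp x \<subseteq> S" for x
    proof -
      have "(w \<bullet> x)\<^sup>2 \<le> (norm w)\<^sup>2 * (norm x)\<^sup>2"
        using Cauchy_Schwarz_ineq[of w x] by (simp add: power2_norm_eq_inner)
      also have "\<dots> \<le> ((norm w)\<^sup>2 + 1) * (norm x)\<^sup>2"
        by (simp add: distrib_right)
      finally have "(w \<bullet> x)\<^sup>2 / ((norm w)\<^sup>2 + 1) \<le> (norm x)\<^sup>2"
        by (simp add: pos_divide_le_eq add_nonneg_pos mult.commute)
      then have "c * ((w \<bullet> x)\<^sup>2 / ((norm w)\<^sup>2 + 1)) \<le> c * (norm x)\<^sup>2"
        using c(1) by (intro mult_left_mono) auto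
      then have "\<gamma> * (w \<bullet> x)\<^sup>2 \<le> c * (norm x)\<^sup>2"
        by (simp add: \<gamma>_def)
      also have "\<dots> \<le> x \<bullet> (A *v x)"
        using c(2) that .
      finally show ?thesis .
    qed
    with \<gamma>_pos show ?thesis
      by blast
  qed
qed

lemma outer_mult_vector: "outer w v *v x = (v \<bullet> x) *\<^sub>R w"
  by (simp add: vec_eq_iff outer_def matrix_vector_mult_def inner_vec_def
      sum_distrib_left algebra_simps)

lemma copositive_minus_outer_iff:
  fixes A :: "real ^ 'n ^ 'n"
  assumes "transpose A = A"
  shows "copositive (A - c *\<^sub>R outer w w) \<longleftrightarrow>
    (\<forall>x. nonneg_vec x \<longrightarrow> c * (w \<bullet> x)\<^sup>2 \<le> x \<bullet> (A *v x))"
proof -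
  have "transpose (A - c *\<^sub>R outer w w) = A - c *\<^sub>R outer w w"
    using assms by (simp add: vec_eq_iff transpose_def outer_def mult.commute)
  moreover have "x \<bullet> ((A - c *\<^sub>R outer w w) *v x) = x \<bullet> (A *v x) - c * (w \<bullet> x)\<^sup>2" for x
    by (simp add: matrix_vector_mult_diff_rdistrib flip: scaleR_matrix_vector_assoc)
      (simp add: outer_mult_vector inner_diff_right power2_eq_square inner_commute)
  ultimately show ?thesis
    by (simp add: copositive_def)
qed

theorem corollary4p4:
  fixes A :: "real ^ 'n ^ 'n" and w :: "real ^ 'n"
  assumes "copositive A" and "w \<noteq> 0"
  shows "irreducible_wrt A (outer w w) \<longleftrightarrow> (\<exists>u. minimal_zero A u \<and> w \<bullet> u \<noteq> 0)"
proof -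
  have "transpose A = A"
    using \<open>copositive A\<close> by (simp add: copositive_def)
  then have "irreducible_wrt A (outer w w) \<longleftrightarrow>
      \<not> (\<exists>\<gamma>>0. \<forall>x. nonneg_vec x \<longrightarrow> \<gamma> * (w \<bullet> x)\<^sup>2 \<le> x \<bullet> (A *v x))"
    by (simp add: irreducible_wrt_def copositive_minus_outer_iff)
  also have "\<dots> \<longleftrightarrow> (\<exists>u. minimal_zero A u \<and> w \<bullet> u \<noteq> 0)"
  proof
    assume "\<not> (\<exists>\<gamma>>0. \<forall>x. nonneg_vec x \<longrightarrow> \<gamma> * (w \<bullet> x)\<^sup>2 \<le> x \<bullet> (A *v x))"
    then show "\<exists>u. minimal_zero A u \<and> w \<bullet> u \<noteq> 0"
      using rank_one_bound_on_face[OF \<open>copositive A\<close>, of w UNIV] by auto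
  next
    assume "\<exists>u. minimal_zero A u \<and> w \<bullet> u \<noteq> 0"
    then obtain u where u: "is_zero A u" "w \<bullet> u \<noteq> 0"
      by (auto simp: minimal_zero_def)
    have "\<gamma> * (w \<bullet> u)\<^sup>2 > u \<bullet> (A *v u)" if "\<gamma> > 0" for \<gamma>
      using u that by (simp add: is_zero_def)
    then show "\<not> (\<exists>\<gamma>>0. \<forall>x. nonneg_vec x \<longrightarrow> \<gamma> * (w \<bullet> x)\<^sup>2 \<le> x \<bullet> (A *v x))"
      using u(1) by (auto simp: is_zero_def not_le)
  qed
  finally show ?thesis .
qed

end
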